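(* Let $N,W$ be positive integers and let $P$ be a nonzero polynomial of degree at most $N$ with integer coefficients of absolute value at most $W$. If $1$ is a root of $P$ of order $k$, then \[k\le\left\lfloor\frac{16}{7}W^{1/4}\sqrt{N}\right\rfloor+4.\]
   Context: A number $\alpha$ is a root of $P$ of order $k$ if $P(x)=Q(x)(x-\alpha)^k$ for some polynomial $Q$ with $Q(\alpha)\neq0$. *)

theory Defs
  imports "HOL-Computational_Algebra.Polynomial"
begin

definition root_of_order :: "'a::comm_ring_1 \<Rightarrow> 'a poly \<Rightarrow> nat \<Rightarrow> bool" where
  "root_of_order \<alpha> P k \<longleftrightarrow> (\<exists>Q. P = Q * [:-\<alpha>, 1:] ^ k \<and> poly Q \<alpha> \<noteq> 0)"

end

(* Write P = \<Sum> a_j x^j. Since (x - 1)^k divides P, applying the operator x d/dx i times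
   (i < k) and evaluating at 1 gives \<Sum> a_j j^i = 0, so \<Sum> a_j f(j) = 0 for every
   polynomial f of degree < k. Let m be the least index with a_m \<noteq> 0, let 4M < k, and take
   f(x) = h(1 - 2(x - m)/N) with h(y) = (U_{M-1}(y) (1 + y))^4, where U_{M-1} is a Chebyshev
   polynomial of the second kind. Then f(m) = 16 M^4, while the Pell identity
   T_M^2 + (1 - y^2) U_{M-1}^2 = 1 gives 0 \<le> f(j) \<le> N^2/(j - m)^2 for m < j \<le> N. Hence
   16 M^4 \<le> |a_m f(m)| \<le> W N^2 \<Sum> 1/i^2 \<le> 5/3 W N^2, and M = (k - 1) div 4 yields the bound. *)

theory Submission
  imports Defs
begin

definition euler_op :: "'a::{comm_semiring_1,semiring_no_zero_divisors} poly \<Rightarrow> 'a poly" where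
  "euler_op p = pCons 0 (pderiv p)"

lemma coeff_euler_op_iterate: "coeff ((euler_op ^^ i) p) j = of_nat j ^ i * coeff p j"
proof (induction i)
  case (Suc i)
  then show ?case by (cases j) (simp_all add: euler_op_def coeff_pderiv algebra_simps)
qed simp

lemma degree_euler_op_iterate_le: "degree ((euler_op ^^ i) p) \<le> degree p"
  by (rule degree_le) (auto simp: coeff_euler_op_iterate coeff_eq_0)

lemma linear_power_dvd_euler_op:
  fixes p :: "'a::idom poly"
  assumes "[:-a, 1:] ^ Suc r dvd p"
  shows "[:-a, 1:] ^ r dvd euler_op p"
proof -
  obtain q where p: "p = [:-a, 1:] ^ Suc r * q" using assms by (elim dvdE)
  have "pderiv p = [:-a, 1:] ^ r * ([:-a, 1:] * pderiv q + smult (of_nat (Suc r)) q)"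
    unfolding p pderiv_mult pderiv_power_Suc by (simp add: pderiv_pCons algebra_simps)
  then have "[:-a, 1:] ^ r dvd pderiv p" by simp
  moreover have "euler_op p = [:0, 1:] * pderiv p"
    by (simp add: euler_op_def)
  ultimately show ?thesis
    by (metis dvd_mult)
qed

lemma poly_euler_op_iterate_eq_0:
  fixes p :: "'a::idom poly"
  assumes "[:-a, 1:] ^ k dvd p" and "i < k"
  shows "poly ((euler_op ^^ i) p) a = 0"
proof -
  have "[:-a, 1:] ^ (k - i) dvd (euler_op ^^ i) p" if "i \<le> k" for i
    using that
  proof (induction i)
    case (Suc i)
    then have "[:-a, 1:] ^ Suc (k - Suc i) dvd (euler_op ^^ i) p"
      by (simp add: Suc_diff_Suc)
    then show ?case by (simp add: linear_power_dvd_euler_op)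
  qed (simp add: assms(1))
  moreover have "[:-a, 1:] dvd [:-a, 1:] ^ (k - i)"
    using assms(2) by (simp add: dvd_power)
  ultimately show ?thesis
    using assms(2) by (meson dvd_trans less_imp_le poly_eq_0_iff_dvd)
qed

lemma poly_eq_sum_atMost:
  fixes p :: "'a::comm_semiring_1 poly"
  assumes "degree p \<le> n"
  shows "poly p x = (\<Sum>j\<le>n. coeff p j * x ^ j)"
  unfolding poly_altdef
  by (rule sum.mono_neutral_left) (use assms in \<open>auto simp: coeff_eq_0\<close>)

lemma sum_coeff_mult_poly_of_nat_eq_0:
  fixes P :: "int poly" and f :: "'a::comm_ring_1 poly"
  assumes "[:-1, 1:] ^ k dvd P" and "degree P \<le> N" and "degree f < k"
  shows "(\<Sum>j\<le>N. of_int (coeff P j) * poly f (of_nat j)) = 0"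
proof -
  have moment: "(\<Sum>j\<le>N. of_int (coeff P j) * of_nat j ^ i) = (0 :: 'a)" if "i \<le> degree f" for i
  proof -
    have "poly ((euler_op ^^ i) P) 1 = 0"
      using that assms by (intro poly_euler_op_iterate_eq_0) auto
    then have "(\<Sum>j\<le>N. coeff P j * int j ^ i) = 0"
      using poly_eq_sum_atMost[OF order_trans[OF degree_euler_op_iterate_le assms(2)]]
      by (simp add: coeff_euler_op_iterate mult.commute)
    from arg_cong[OF this, of "of_int :: int \<Rightarrow> 'a"] show ?thesis
      by simp
  qed
  have "(\<Sum>j\<le>N. of_int (coeff P j) * poly f (of_nat j))
      = (\<Sum>i\<le>degree f. coeff f i * (\<Sum>j\<le>N. of_int (coeff P j) * of_nat j ^ i))"
    by (simp add: poly_altdef sum_distrib_left algebra_simps sum.swap[of _ "{..N}"])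
  also have "\<dots> = 0"
    by (simp add: moment)
  finally show ?thesis .
qed

(* cheb_pair m = (T_m, U_{m-1}), the Chebyshev polynomials of the first and second kind:
   T_m(cos t) = cos (m t) and U_{m-1}(cos t) = sin (m t) / sin t. *)
fun cheb_pair :: "nat \<Rightarrow> 'a::comm_ring_1 poly \<times> 'a poly" where
  "cheb_pair 0 = (1, 0)"
| "cheb_pair (Suc m) =
    ([:0, 1:] * fst (cheb_pair m) - (1 - [:0, 1:] ^ 2) * snd (cheb_pair m),
     fst (cheb_pair m) + [:0, 1:] * snd (cheb_pair m))"

lemma cheb_pair_pell:
  "fst (cheb_pair m) ^ 2 + (1 - [:0, 1:] ^ 2) * snd (cheb_pair m) ^ 2 = (1 :: 'a::comm_ring_1 poly)"
proof (induction m)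
  case (Suc m)
  have "(x * t - (1 - x ^ 2) * u) ^ 2 + (1 - x ^ 2) * (t + x * u) ^ 2 = t ^ 2 + (1 - x ^ 2) * u ^ 2"
    for x t u :: "'a poly"
    by (simp add: power2_eq_square algebra_simps)
  from this[of "[:0, 1:]" "fst (cheb_pair m)" "snd (cheb_pair m)"] Suc show ?case
    by (simp only: cheb_pair.simps fst_conv snd_conv)
qed simp

lemma poly_cheb_pair_one:
  "poly (fst (cheb_pair m)) 1 = (1 :: 'a::comm_ring_1) \<and> poly (snd (cheb_pair m)) 1 = (of_nat m :: 'a)"
  by (induction m) simp_all

lemma degree_cheb_pair_le:
  "degree (fst (cheb_pair m) :: 'a::comm_ring_1 poly) \<le> m \<and> degree (snd (cheb_pair m) :: 'a poly) \<le> m - 1"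
proof (induction m)
  case (Suc m)
  have "degree (1 - [:0, 1:] ^ 2 :: 'a poly) \<le> 2"
    using degree_diff_le[of 1 2 "[:0, 1:] ^ 2"] degree_power_le[of "[:0, 1 :: 'a:]" 2] by simp
  then have "degree ((1 - [:0, 1:] ^ 2) * snd (cheb_pair m) :: 'a poly) \<le> Suc m"
    using Suc.IH degree_mult_le[of "1 - [:0, 1:] ^ 2" "snd (cheb_pair m) :: 'a poly"] by (cases m) auto
  with Suc.IH show ?case
    by (cases m) (auto intro!: degree_diff_le degree_add_le)
qed simp

definition cheb_peak :: "nat \<Rightarrow> 'a::comm_ring_1 poly" where
  "cheb_peak M = (snd (cheb_pair M) * [:1, 1:]) ^ 4"

lemma degree_cheb_peak_le: "degree (cheb_peak M) \<le> 4 * M"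
proof -
  have "degree (snd (cheb_pair M) * [:1, 1:] :: 'a::comm_ring_1 poly) \<le> M"
  proof (cases M)
    case (Suc m)
    then show ?thesis
      using degree_mult_le[of "snd (cheb_pair M)" "[:1, 1 :: 'a:]"] degree_cheb_pair_le[of M, where 'a = 'a]
      by (simp del: cheb_pair.simps)
  qed simp
  then show ?thesis
    unfolding cheb_peak_def by (intro order_trans[OF degree_power_le]) simp
qed

lemma poly_cheb_peak_one: "poly (cheb_peak M) 1 = 16 * of_nat M ^ 4"
  using poly_cheb_pair_one[of M, where 'a = 'a] by (simp add: cheb_peak_def power_mult_distrib)

lemma poly_cheb_peak_nonneg: "0 \<le> poly (cheb_peak M) (x :: 'a::linordered_idom)"
  by (simp add: cheb_peak_def zero_le_even_power)

lemma poly_cheb_peak_mult_le: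
  fixes x :: "'a::linordered_idom"
  assumes "-1 \<le> x" and "x \<le> 1"
  shows "poly (cheb_peak M) x * (1 - x) ^ 2 \<le> 4"
proof -
  define u where "u = poly (snd (cheb_pair M)) x"
  define s where "s = (1 - x ^ 2) * u ^ 2"
  have "poly (fst (cheb_pair M)) x ^ 2 + s = 1"
    using arg_cong[OF cheb_pair_pell[of M], of "\<lambda>p. poly p x"] by (simp add: s_def u_def)
  moreover have "0 \<le> s"
    using assms by (simp add: s_def abs_square_le_1)
  moreover have "s \<le> 1"
    using calculation zero_le_power2[of "poly (fst (cheb_pair M)) x"] by linarith
  ultimately have "s ^ 2 \<le> 1"
    by (simp add: power_le_one)
  moreover have "(1 + x) ^ 2 \<le> 4"
    using assms power_mono[of "1 + x" 2 2] by simp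
  moreover have "poly (cheb_peak M) x * (1 - x) ^ 2 = s ^ 2 * (1 + x) ^ 2"
  proof -
    have "poly (cheb_peak M) x = (u * (1 + x)) ^ 4"
      unfolding cheb_peak_def poly_power poly_mult u_def by simp
    moreover have "1 - x ^ 2 = (1 - x) * (1 + x)"
      by (simp add: power2_eq_square algebra_simps)
    ultimately show ?thesis
      by (simp add: s_def power_mult_distrib mult_ac flip: power_mult power_add)
  qed
  ultimately show ?thesis
    using mult_mono[of "s ^ 2" 1 "(1 + x) ^ 2" 4] by simp
qed

lemma poly_cheb_peak_le:
  fixes d N :: real
  assumes "0 < d" and "d \<le> N"
  shows "poly (cheb_peak M) (1 - 2 * d / N) \<le> (N / d) ^ 2"
proof -
  have "poly (cheb_peak M) (1 - 2 * d / N) * (2 * d / N) ^ 2 \<le> 4"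
    using poly_cheb_peak_mult_le[of "1 - 2 * d / N" M] assms by (simp add: field_simps)
  then show ?thesis
    using assms by (simp add: field_simps power2_eq_square)
qed

lemma sum_inverse_squares_le: "(\<Sum>i = 1..n. 1 / real i ^ 2) \<le> 5 / 3"
proof -
  have telescoped: "(\<Sum>i = 1..n. 1 / real i ^ 2) \<le> 5 / 3 - 2 / (2 * real n + 1)" if "n \<ge> 1" for n
    using that
  proof (induction n rule: dec_induct)
    case (step n)
    have "1 / real (Suc n) ^ 2 = 4 / (4 * real (Suc n) ^ 2)"
      by simp
    also have "\<dots> \<le> 4 / ((2 * real n + 1) * (2 * real n + 3))"
      by (intro divide_left_mono mult_pos_pos) (auto simp: power2_eq_square algebra_simps add_pos_nonneg)
    also have "\<dots> = 2 / (2 * real n + 1) - 2 / (2 * real (Suc n) + 1)"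
      by (simp add: field_simps)
    finally show ?case
      using step.IH by simp
  qed simp
  show ?thesis
  proof (cases "n = 0")
    case False
    moreover have "0 \<le> 2 / (2 * real n + 1)"
      by simp
    ultimately show ?thesis
      using telescoped[of n] by linarith
  qed simp
qed

lemma root_one_order_fourth_power_bound:
  fixes P :: "int poly" and N W k M :: nat
  assumes "N > 0" and "P \<noteq> 0" and "degree P \<le> N" and "\<forall>i. \<bar>coeff P i\<bar> \<le> int W"
    and "[:-1, 1:] ^ k dvd P" and "4 * M < k"
  shows "16 * real M ^ 4 \<le> 5 / 3 * (real W * real N ^ 2)"
proof -
  define m where "m = (LEAST j. coeff P j \<noteq> 0)"
  have "coeff P (degree P) \<noteq> 0"
    using assms(2) by simp
  then have coeff_m: "coeff P m \<noteq> 0"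
    unfolding m_def by (rule LeastI)
  have below_m: "coeff P j = 0" if "j < m" for j
    using that unfolding m_def by (rule not_less_Least[THEN notnotD])
  have "m \<le> N"
    using le_degree[OF coeff_m] assms(3) by linarith
  define f :: "real poly" where "f = pcompose (cheb_peak M) [:1 + 2 * real m / real N, - 2 / real N:]"
  have poly_f: "poly f x = poly (cheb_peak M) (1 - 2 * (x - real m) / real N)" for x
    unfolding f_def poly_pcompose
    by (rule arg_cong[where f = "poly (cheb_peak M)"]) (use assms(1) in \<open>simp add: field_simps\<close>)
  have "degree f \<le> degree (cheb_peak M :: real poly) * 1"
    unfolding f_def by (intro order_trans[OF degree_pcompose_le] mult_le_mono2) simp
  then have "degree f < k"
    using degree_cheb_peak_le[of M, where 'a = real] assms(6) by linarith
  define g where "g j = real_of_int (coeff P j) * poly f (real j)" for j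
  have "(\<Sum>j\<le>N. g j) = 0"
    unfolding g_def using sum_coeff_mult_poly_of_nat_eq_0[OF assms(5,3) \<open>degree f < k\<close>] by simp
  moreover have "(\<Sum>j\<le>N. g j) = (\<Sum>j\<in>{m..N}. g j)"
    by (rule sum.mono_neutral_right) (auto simp: g_def below_m)
  moreover have "(\<Sum>j\<in>{m..N}. g j) = g m + (\<Sum>j\<in>{Suc m..N}. g j)"
    using \<open>m \<le> N\<close> by (simp add: sum.atLeast_Suc_atMost)
  ultimately have g_m: "g m = - (\<Sum>j\<in>{Suc m..N}. g j)"
    by simp
  have g_bound: "\<bar>g j\<bar> \<le> real W * (real N / real (j - m)) ^ 2" if "j \<in> {Suc m..N}" for j
  proof -
    have "\<bar>real_of_int (coeff P j)\<bar> \<le> real W"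
      using assms(4) by (metis of_int_abs of_int_le_iff of_int_of_nat_eq)
    moreover have "poly f (real j) \<le> (real N / real (j - m)) ^ 2"
      using poly_cheb_peak_le[of "real (j - m)" "real N" M] that by (simp add: poly_f of_nat_diff)
    moreover have "0 \<le> poly f (real j)"
      by (simp add: poly_f poly_cheb_peak_nonneg)
    ultimately show ?thesis
      unfolding g_def abs_mult by (intro mult_mono) simp_all
  qed
  have reindex: "(\<Sum>j\<in>{Suc m..N}. 1 / real (j - m) ^ 2) = (\<Sum>i = 1..N - m. 1 / real i ^ 2)"
    by (rule sum.reindex_bij_witness[where i = "\<lambda>i. i + m" and j = "\<lambda>j. j - m"]) auto
  have "1 \<le> \<bar>coeff P m\<bar>"
    using coeff_m by linarith
  then have "16 * real M ^ 4 \<le> \<bar>real_of_int (coeff P m)\<bar> * (16 * real M ^ 4)"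
    by (simp add: mult_le_cancel_right1 flip: of_int_abs)
  also have "\<dots> = \<bar>g m\<bar>"
    by (simp add: g_def poly_f poly_cheb_peak_one abs_mult)
  also have "\<dots> \<le> (\<Sum>j\<in>{Suc m..N}. \<bar>g j\<bar>)"
    unfolding g_m abs_minus_cancel by (rule sum_abs)
  also have "\<dots> \<le> (\<Sum>j\<in>{Suc m..N}. real W * (real N / real (j - m)) ^ 2)"
    by (rule sum_mono) (rule g_bound)
  also have "\<dots> = real W * real N ^ 2 * (\<Sum>i = 1..N - m. 1 / real i ^ 2)"
    unfolding reindex[symmetric] by (simp add: sum_distrib_left power_divide)
  also have "\<dots> \<le> real W * real N ^ 2 * (5 / 3)"
    by (intro mult_left_mono sum_inverse_squares_le) auto
  finally show ?thesis
    by (simp only: mult.commute)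
qed

lemma four_mult_le_of_fourth_power_le:
  fixes M W N :: real
  assumes "0 \<le> W" and "0 \<le> N" and "16 * M ^ 4 \<le> 5 / 3 * (W * N ^ 2)"
  shows "4 * M \<le> 16 / 7 * root 4 W * sqrt N"
proof -
  have "sqrt N ^ 4 = N ^ 2"
    using power_mult[of "sqrt N" 2 2] assms(2) by simp
  have "(4 * M) ^ 4 = 16 * (16 * M ^ 4)"
    by simp
  also have "\<dots> \<le> 80 / 3 * (W * N ^ 2)"
    using assms(3) by simp
  also have "\<dots> \<le> (16 / 7) ^ 4 * (W * N ^ 2)"
    using assms(1) by (intro mult_right_mono) (simp_all add: power_divide)
  also have "\<dots> = (16 / 7 * root 4 W * sqrt N) ^ 4"
    unfolding power_mult_distrib \<open>sqrt N ^ 4 = N ^ 2\<close> using assms(1) by simp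
  moreover have "0 \<le> 16 / 7 * root 4 W * sqrt N"
    using assms(1,2) by simp
  ultimately show ?thesis
    using power_mono_iff[of "4 * M" "16 / 7 * root 4 W * sqrt N" 4] by (cases "0 \<le> M") auto
qed

theorem lemma4p6:
  fixes N W k :: nat and P :: "int poly"
  assumes "N > 0" and "W > 0"
    and "P \<noteq> 0" and "degree P \<le> N"
    and "\<forall>i. \<bar>coeff P i\<bar> \<le> int W"
    and "root_of_order 1 P k"
  shows "int k \<le> \<lfloor>16 / 7 * root 4 (real W) * sqrt (real N)\<rfloor> + 4"
proof -
  have "0 \<le> 16 / 7 * root 4 (real W) * sqrt (real N)"
    by simp
  have "real k \<le> 16 / 7 * root 4 (real W) * sqrt (real N) + 4"
  proof (cases "k \<le> 4")
    case False
    define M where "M = (k - 1) div 4"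
    have "4 * M < k" and "real k \<le> 4 * real M + 4"
      using False unfolding M_def by linarith+
    have "[:-1, 1:] ^ k dvd P"
      using assms(6) by (auto simp: root_of_order_def)
    then have "16 * real M ^ 4 \<le> 5 / 3 * (real W * real N ^ 2)"
      using root_one_order_fourth_power_bound assms(1,3,4,5) \<open>4 * M < k\<close> by blast
    then have "4 * real M \<le> 16 / 7 * root 4 (real W) * sqrt (real N)"
      by (intro four_mult_le_of_fourth_power_le) auto
    with \<open>real k \<le> 4 * real M + 4\<close> show ?thesis
      by linarith
  qed (use \<open>0 \<le> 16 / 7 * root 4 (real W) * sqrt (real N)\<close> in linarith)
  then show ?thesis
    by linarith
qed

end
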